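(* Fix $k\in\mathbb{N}$. Suppose $M$ is a matroid that is nearly finitary but not $n$-nearly finitary for any $n\in\mathbb{N}$. Then $M[k]$ is nearly finitary but not $n$-nearly finitary for any $n\in\mathbb{N}$.
   Context: Matroids (possibly infinite): $\emptyset$ independent; subsets of independent sets independent; if $B$ is maximal independent and $A$ non-maximal independent, then $A\cup\{b\}$ is independent for some $b\in B\setminus A$; for independent $A\subseteq X\subseteq E$ there is a maximal independent $S$ with $A\subseteq S\subseteq X$. Bases are maximal independent sets; the rank is the cardinality of a base (infinite cardinalities identified). For a matroid $M=(E,\mathcal{L})$ of rank at least $k$, $M[k]=(E,\mathcal{L}[k])$ with $\mathcal{L}[k]=\{S\in\mathcal{L}:\exists T\in\mathcal{L},\ T\supseteq S,\ |T\setminus S|=k\}$, which is a matroid. The finitarization $M^{\mathrm{fin}}$ has as independent sets those sets all of whose finite subsets are independent in $M$. $M$ is nearly finitary if $F\setminus B$ is finite whenever a base $F$ of $M^{\mathrm{fin}}$ contains a base $B$ of $M$; $n$-nearly finitary if $|F\setminus B|\le n$ for all such pairs. *)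

theory Defs
  imports Main
begin

definition maximal_in :: "'a set set \<Rightarrow> 'a set \<Rightarrow> bool" where
  "maximal_in \<I> S \<longleftrightarrow> S \<in> \<I> \<and> (\<forall>T\<in>\<I>. S \<subseteq> T \<longrightarrow> T = S)"

definition matroid :: "'a set \<Rightarrow> 'a set set \<Rightarrow> bool" where
  "matroid E \<I> \<longleftrightarrow>
     (\<forall>S\<in>\<I>. S \<subseteq> E) \<and>
     {} \<in> \<I> \<and>
     (\<forall>S T. T \<in> \<I> \<longrightarrow> S \<subseteq> T \<longrightarrow> S \<in> \<I>) \<and>
     (\<forall>A B. maximal_in \<I> B \<longrightarrow> A \<in> \<I> \<longrightarrow> \<not> maximal_in \<I> A \<longrightarrow>
        (\<exists>b\<in>B - A. insert b A \<in> \<I>)) \<and>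
     (\<forall>A X. A \<in> \<I> \<longrightarrow> A \<subseteq> X \<longrightarrow> X \<subseteq> E \<longrightarrow>
        (\<exists>S. A \<subseteq> S \<and> S \<subseteq> X \<and> maximal_in {I \<in> \<I>. I \<subseteq> X} S))"

abbreviation basis :: "'a set set \<Rightarrow> 'a set \<Rightarrow> bool" where
  "basis \<I> B \<equiv> maximal_in \<I> B"

definition fin_indep :: "'a set \<Rightarrow> 'a set set \<Rightarrow> 'a set set" where
  "fin_indep E \<I> = {S. S \<subseteq> E \<and> (\<forall>F. F \<subseteq> S \<longrightarrow> finite F \<longrightarrow> F \<in> \<I>)}"

definition nearly_finitary :: "'a set \<Rightarrow> 'a set set \<Rightarrow> bool" where
  "nearly_finitary E \<I> \<longleftrightarrow>
     (\<forall>F B. basis (fin_indep E \<I>) F \<longrightarrow> basis \<I> B \<longrightarrow> B \<subseteq> F \<longrightarrow> finite (F - B))"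

definition n_nearly_finitary :: "nat \<Rightarrow> 'a set \<Rightarrow> 'a set set \<Rightarrow> bool" where
  "n_nearly_finitary n E \<I> \<longleftrightarrow>
     (\<forall>F B. basis (fin_indep E \<I>) F \<longrightarrow> basis \<I> B \<longrightarrow> B \<subseteq> F \<longrightarrow>
        finite (F - B) \<and> card (F - B) \<le> n)"

definition trunc :: "nat \<Rightarrow> 'a set set \<Rightarrow> 'a set set" where
  "trunc k \<I> = {S \<in> \<I>. \<exists>T\<in>\<I>. S \<subseteq> T \<and> finite (T - S) \<and> card (T - S) = k}"

end

theory Submission
  imports Defs
begin

text \<open>If M is not 0-nearly finitary, some basis F of its finitarization properly contains a basis
B0 of M. Were any basis of M finite, so would be B0 (bases differ by equally many elements), and
B0 plus an element of F - B0 would be a finite, hence independent, subset of F. So all bases of M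
are infinite, every finite independent set can be enlarged by k independent elements, i.e. it is
independent in M[k], and M and M[k] have the same finitarization.

Removing k elements from a basis B of M gives a basis of M[k], because no independent set exceeds
B minus k elements by more than k elements. Applied to bases B \<subseteq> F with F - B large, this shows
that M[k] is not n-nearly finitary. Conversely, a basis B' of M[k] inside a basis F of the
finitarization extends to a maximal independent subset S of F. Using a finite circuit in F plus
one element and augmentation in restrictions of M, S is a basis of M; so F - S is finite because
M is nearly finitary, and S - B' is finite because B' is a basis of M[k].\<close>

lemma maximal_in_mem: "maximal_in \<A> S \<Longrightarrow> S \<in> \<A>"
  unfolding maximal_in_def by simp

lemma maximal_in_eq: "maximal_in \<A> S \<Longrightarrow> T \<in> \<A> \<Longrightarrow> S \<subseteq> T \<Longrightarrow> T = S"
  unfolding maximal_in_def by simp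

lemma maximal_in_insert: "maximal_in \<A> S \<Longrightarrow> insert x S \<in> \<A> \<Longrightarrow> x \<in> S"
  unfolding maximal_in_def by blast

lemma maximal_in_restrict_insert:
  "maximal_in {J \<in> I. J \<subseteq> X} S \<Longrightarrow> insert x S \<in> I \<Longrightarrow> x \<in> X \<Longrightarrow> x \<in> S"
  unfolding maximal_in_def by blast

lemma trunc_subset: "trunc k I \<subseteq> I"
  unfolding trunc_def by auto

locale matroid_on =
  fixes E :: "'a set" and I :: "'a set set"
  assumes matroid: "matroid E I"
begin

lemma indep_subset_ground: "S \<in> I \<Longrightarrow> S \<subseteq> E"
  using matroid unfolding matroid_def by simp

lemma empty_indep: "{} \<in> I"
  using matroid unfolding matroid_def by simp

lemma indep_subset: "T \<in> I \<Longrightarrow> S \<subseteq> T \<Longrightarrow> S \<in> I"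
  using matroid unfolding matroid_def by simp

lemma basis_augment:
  "basis I B \<Longrightarrow> A \<in> I \<Longrightarrow> \<not> basis I A \<Longrightarrow> \<exists>b\<in>B - A. insert b A \<in> I"
  using matroid unfolding matroid_def by simp

lemma maximal_indep_subsetE:
  assumes "A \<in> I" "A \<subseteq> X" "X \<subseteq> E"
  obtains S where "A \<subseteq> S" "S \<subseteq> X" "maximal_in {J \<in> I. J \<subseteq> X} S"
  using matroid assms unfolding matroid_def by metis

lemma basis_extend:
  assumes "A \<in> I"
  obtains B where "basis I B" "A \<subseteq> B"
proof -
  have "{J \<in> I. J \<subseteq> E} = I"
    using indep_subset_ground by blast
  then show ?thesis
    using maximal_indep_subsetE[OF assms indep_subset_ground[OF assms] order_refl] that by metis
qed

lemma exists_basis: "\<exists>B. basis I B"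
  using basis_extend[OF empty_indep] by metis

lemma maximal_in_spanning_set_is_basis:
  assumes B: "basis I B" and "B \<subseteq> Y" and J: "maximal_in {K \<in> I. K \<subseteq> Y} J"
  shows "basis I J"
proof (rule ccontr)
  have "J \<in> I" "J \<subseteq> Y"
    using maximal_in_mem[OF J] by auto
  moreover assume "\<not> basis I J"
  ultimately obtain b where "b \<in> B - J" "insert b J \<in> I"
    using basis_augment[OF B] by blast
  with \<open>B \<subseteq> Y\<close> \<open>J \<subseteq> Y\<close> show False
    using maximal_in_insert[OF J] by blast
qed

lemma basis_exchange:
  assumes B: "basis I B" and "x \<in> B" "b \<notin> B" and indep: "insert b (B - {x}) \<in> I"
  shows "basis I (insert b (B - {x}))"
proof (rule ccontr)
  assume "\<not> basis I (insert b (B - {x}))"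
  then obtain c where c: "c \<in> B - insert b (B - {x})" "insert c (insert b (B - {x})) \<in> I"
    using basis_augment[OF B indep] by blast
  from c(1) have "c = x"
    by auto
  then have "insert b B \<in> I"
    using c \<open>x \<in> B\<close> by (metis insert_Diff insert_commute)
  then show False
    using maximal_in_insert[OF B] \<open>b \<notin> B\<close> by blast
qed

lemma basis_diff_card_le:
  assumes "basis I B1" "basis I B2" "finite (B1 - B2)"
  shows "finite (B2 - B1) \<and> card (B2 - B1) \<le> card (B1 - B2)"
  using assms
proof (induction "card (B1 - B2)" arbitrary: B1)
  case 0
  then have "B1 \<subseteq> B2" by auto
  then have "B2 = B1"
    using maximal_in_eq[OF \<open>basis I B1\<close>] maximal_in_mem[OF \<open>basis I B2\<close>] by blast
  then show ?case by simp
next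
  case (Suc n)
  then obtain x where x: "x \<in> B1 - B2"
    by (metis card.empty ex_in_conv nat.distinct(1))
  have B1: "B1 \<in> I"
    using maximal_in_mem[OF \<open>basis I B1\<close>] .
  have "B1 - {x} \<in> I" "\<not> basis I (B1 - {x})"
    using indep_subset[OF B1] maximal_in_eq[of I "B1 - {x}" B1] B1 x by auto
  then obtain b where b: "b \<in> B2 - (B1 - {x})" "insert b (B1 - {x}) \<in> I"
    using basis_augment[OF \<open>basis I B2\<close>] by blast
  define B3 where "B3 = insert b (B1 - {x})"
  have "b \<notin> B1"
    using b x by auto
  then have "basis I B3"
    unfolding B3_def using basis_exchange[OF \<open>basis I B1\<close> _ _ b(2)] x by blast
  moreover have "B3 - B2 = (B1 - B2) - {x}"
    unfolding B3_def using b by auto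
  ultimately have "finite (B3 - B2)" "n = card (B3 - B2)"
    using Suc.hyps(2) Suc.prems(3) x by auto
  then have IH: "finite (B2 - B3) \<and> card (B2 - B3) \<le> n"
    using Suc.hyps(1) \<open>basis I B3\<close> Suc.prems(2) by simp
  have "B2 - B1 = insert b (B2 - B3)"
    unfolding B3_def using b x by auto
  with IH \<open>Suc n = card (B1 - B2)\<close> show ?case
    by (simp add: card_insert_if)
qed

lemma card_indep_over_basis_minus_le:
  assumes B: "basis I B" and X: "X \<subseteq> B" "finite X" and J: "J \<in> I" "B - X \<subseteq> J"
  shows "finite (J - (B - X)) \<and> card (J - (B - X)) \<le> card X"
proof -
  obtain B2 where B2: "basis I B2" "J \<subseteq> B2"
    using basis_extend[OF J(1)] by blast
  have "B - B2 \<subseteq> X - J"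
    using J B2 by auto
  with X have "finite (B - B2)" "card (B - B2) \<le> card (X - J)"
    by (auto intro: finite_subset card_mono)
  then have B2B: "finite (B2 - B)" "card (B2 - B) \<le> card (X - J)"
    using basis_diff_card_le[OF B B2(1)] by auto
  have split: "J - (B - X) \<subseteq> (B2 - B) \<union> (X \<inter> J)"
    using B2 by auto
  then have "finite (J - (B - X))"
    using B2B X by (meson finite_Int finite_UnI finite_subset)
  moreover have "card (J - (B - X)) \<le> card (B2 - B) + card (X \<inter> J)"
    using card_mono[OF _ split] card_Un_le[of "B2 - B" "X \<inter> J"] B2B X by fastforce
  moreover have "card X = card (X \<inter> J) + card (X - J)"
    using card_Int_Diff[OF X(2)] .
  ultimately show ?thesis
    using B2B by linarith
qed

lemma basis_betweenE:
  assumes B: "maximal_in {J \<in> I. J \<subseteq> X} B" and B': "basis I B'" "B \<subseteq> B'"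
    and P: "P \<in> I" "P \<subseteq> X"
  obtains J where "basis I J" "P \<union> (B' - B) \<subseteq> J" "J \<subseteq> P \<union> B'"
proof -
  have B'I: "B' \<in> I"
    using maximal_in_mem[OF B'(1)] .
  have "P \<union> B' \<subseteq> E"
    using indep_subset_ground[OF P(1)] indep_subset_ground[OF B'I] by blast
  then obtain J where J: "P \<subseteq> J" "J \<subseteq> P \<union> B'" "maximal_in {K \<in> I. K \<subseteq> P \<union> B'} J"
    by (rule maximal_indep_subsetE[OF P(1) Un_upper1])
  have bJ: "basis I J"
    using maximal_in_spanning_set_is_basis[OF B'(1) _ J(3)] by blast
  define K where "K = B \<union> (J - P)"
  have "K \<subseteq> B'"
    unfolding K_def using J B' by auto
  then have KI: "K \<in> I"
    using indep_subset[OF B'I] by blast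
  have "basis I K"
  proof (rule ccontr)
    assume "\<not> basis I K"
    then obtain j where j: "j \<in> J - K" "insert j K \<in> I"
      using basis_augment[OF bJ KI] by blast
    then have "j \<in> P" "j \<notin> B"
      unfolding K_def by auto
    moreover have "insert j B \<in> I"
      by (rule indep_subset[OF j(2)]) (auto simp: K_def)
    ultimately show False
      using maximal_in_restrict_insert[OF B] P(2) by blast
  qed
  then have "B' = K"
    using maximal_in_eq B'I \<open>K \<subseteq> B'\<close> by metis
  then have "B' - B \<subseteq> J"
    unfolding K_def by blast
  then show ?thesis
    using that[OF bJ _ J(2)] J(1) by blast
qed

lemma restriction_augment:
  assumes B: "maximal_in {J \<in> I. J \<subseteq> X} B" and P: "P \<in> I" "P \<subseteq> X"
    and not_max: "\<not> maximal_in {J \<in> I. J \<subseteq> X} P"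
  shows "\<exists>b\<in>B - P. insert b P \<in> I"
proof (rule ccontr)
  assume no_aug: "\<not> (\<exists>b\<in>B - P. insert b P \<in> I)"
  \<comment> \<open>then a basis through P and B' - B is exactly P \<union> (B' - B), yet it is properly
    contained in a basis through insert x P\<close>
  obtain T where T: "T \<in> I" "T \<subseteq> X" "P \<subseteq> T" "T \<noteq> P"
    using not_max P unfolding maximal_in_def by auto
  then obtain x where x: "x \<in> T - P" "x \<in> X"
    by blast
  have xP: "insert x P \<in> I"
    by (rule indep_subset[OF T(1)]) (use T x in blast)
  have BX: "B \<in> I" "B \<subseteq> X"
    using maximal_in_mem[OF B] by auto
  obtain B' where B': "basis I B'" "B \<subseteq> B'"
    using basis_extend[OF BX(1)] by blast
  obtain J where J: "basis I J" "P \<union> (B' - B) \<subseteq> J" "J \<subseteq> P \<union> B'"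
    by (rule basis_betweenE[OF B B' P])
  have "J \<inter> B \<subseteq> P"
  proof
    fix b assume b: "b \<in> J \<inter> B"
    have "insert b P \<in> I"
      by (rule indep_subset[OF maximal_in_mem[OF J(1)]]) (use b J(2) in blast)
    then show "b \<in> P"
      using no_aug b by blast
  qed
  then have J_eq: "J = P \<union> (B' - B)"
    using J(2,3) by blast
  have "x \<notin> B' - B"
  proof
    assume "x \<in> B' - B"
    then have "insert x B \<in> I"
      by (intro indep_subset[OF maximal_in_mem[OF B'(1)]]) (use B'(2) in blast)
    then show False
      using maximal_in_restrict_insert[OF B] x(2) \<open>x \<in> B' - B\<close> by blast
  qed
  then have "x \<notin> J"
    using J_eq x by blast
  have "insert x P \<subseteq> X"
    using x P by blast
  then obtain J2 where J2: "basis I J2" "insert x P \<union> (B' - B) \<subseteq> J2"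
    using basis_betweenE[OF B B' xP] by metis
  have "insert x J \<in> I"
    by (rule indep_subset[OF maximal_in_mem[OF J2(1)]]) (use J2(2) J_eq in blast)
  then show False
    using maximal_in_insert[OF J(1)] \<open>x \<notin> J\<close> by blast
qed

lemma fin_basis_insert_circuitE:
  assumes F: "basis (fin_indep E I) F" and "b \<in> E" "b \<notin> F"
  obtains C where "finite C" "C \<subseteq> insert b F" "b \<in> C" "C \<notin> I" "C - {b} \<in> I"
proof -
  have FI: "F \<in> fin_indep E I"
    using maximal_in_mem[OF F] .
  then have "insert b F \<notin> fin_indep E I"
    using maximal_in_insert[OF F] \<open>b \<notin> F\<close> by blast
  moreover have "insert b F \<subseteq> E"
    using FI \<open>b \<in> E\<close> unfolding fin_indep_def by blast
  ultimately obtain C where C: "C \<subseteq> insert b F" "finite C" "C \<notin> I"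
    unfolding fin_indep_def by blast
  moreover have "C - {b} \<in> I"
    using FI C unfolding fin_indep_def by blast
  moreover have "b \<in> C"
    using C(3) \<open>C - {b} \<in> I\<close> by (metis Diff_empty Diff_insert0)
  ultimately show ?thesis
    using that by blast
qed

lemma maximal_in_fin_basis_is_basis:
  assumes F: "basis (fin_indep E I) F" and S: "maximal_in {J \<in> I. J \<subseteq> F} S"
  shows "basis I S"
proof (rule ccontr)
  have FE: "F \<subseteq> E" and SI: "S \<in> I" and SF: "S \<subseteq> F"
    using maximal_in_mem[OF F] maximal_in_mem[OF S] unfolding fin_indep_def by auto
  assume "\<not> basis I S"
  obtain B0 where B0: "basis I B0"
    using exists_basis by blast
  then obtain b where b: "b \<in> B0 - S" "insert b S \<in> I"
    using basis_augment[OF B0 SI \<open>\<not> basis I S\<close>] by blast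
  have "b \<in> E"
    using indep_subset_ground[OF maximal_in_mem[OF B0]] b(1) by blast
  have "b \<notin> F"
    using maximal_in_restrict_insert[OF S b(2)] b(1) by blast
  obtain C where C: "finite C" "C \<subseteq> insert b F" "b \<in> C" "C \<notin> I" "C - {b} \<in> I"
    by (rule fin_basis_insert_circuitE[OF F \<open>b \<in> E\<close> \<open>b \<notin> F\<close>])
  define X where "X = S \<union> C"
  have "X \<subseteq> E"
    unfolding X_def using SF FE C(2) \<open>b \<in> E\<close> by blast
  have "C - {b} \<subseteq> X" "S \<subseteq> X" "b \<in> X"
    unfolding X_def using C(3) by auto
  obtain W where W: "C - {b} \<subseteq> W" "W \<subseteq> X" "maximal_in {J \<in> I. J \<subseteq> X} W"
    by (rule maximal_indep_subsetE[OF C(5) \<open>C - {b} \<subseteq> X\<close> \<open>X \<subseteq> E\<close>])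
  have "b \<notin> W"
  proof
    assume "b \<in> W"
    then have "C \<subseteq> W"
      using W(1) by blast
    moreover have "W \<in> I"
      using maximal_in_mem[OF W(3)] by simp
    ultimately show False
      using indep_subset C(4) by blast
  qed
  have "\<not> maximal_in {J \<in> I. J \<subseteq> X} S"
    using maximal_in_restrict_insert[of I X S b] b \<open>b \<in> X\<close> by blast
  then obtain w where w: "w \<in> W - S" "insert w S \<in> I"
    using restriction_augment[OF W(3) SI \<open>S \<subseteq> X\<close>] by blast
  \<comment> \<open>the new element comes from the circuit, hence lies in F\<close>
  then have "w \<in> F"
    using W(1,2) \<open>b \<notin> W\<close> C(2) unfolding X_def by blast
  then show False
    using maximal_in_restrict_insert[OF S w(2)] w(1) by blast
qed

lemma trunc_memI:
  assumes "T \<in> I" "S \<subseteq> T" "finite (T - S)" "card (T - S) = k"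
  shows "S \<in> trunc k I"
  using indep_subset[OF assms(1,2)] assms unfolding trunc_def by blast

lemma finite_indep_in_trunc:
  assumes inf: "\<And>B. basis I B \<Longrightarrow> infinite B" and A: "finite A" "A \<in> I"
  shows "A \<in> trunc k I"
proof -
  obtain B where B: "basis I B" "A \<subseteq> B"
    using basis_extend[OF A(2)] by blast
  have "infinite (B - A)"
    using inf[OF B(1)] A(1) by simp
  then obtain Y where Y: "Y \<subseteq> B - A" "finite Y" "card Y = k"
    using infinite_arbitrarily_large by blast
  have "A \<union> Y \<in> I"
    by (rule indep_subset[OF maximal_in_mem[OF B(1)]]) (use Y B in blast)
  moreover have "A \<union> Y - A = Y"
    using Y by auto
  ultimately show ?thesis
    using trunc_memI[of "A \<union> Y" A k] Y by simp
qed

lemma fin_indep_trunc_eq: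
  assumes "\<And>B. basis I B \<Longrightarrow> infinite B"
  shows "fin_indep E (trunc k I) = fin_indep E I"
proof
  show "fin_indep E (trunc k I) \<subseteq> fin_indep E I"
    using trunc_subset unfolding fin_indep_def by blast
  show "fin_indep E I \<subseteq> fin_indep E (trunc k I)"
    using finite_indep_in_trunc[OF assms] unfolding fin_indep_def by blast
qed

lemma trunc_basis_finite_diff:
  assumes B': "basis (trunc k I) B'" and J: "J \<in> I" "B' \<subseteq> J"
  shows "finite (J - B')"
proof (rule ccontr)
  assume "infinite (J - B')"
  then obtain Y where Y: "Y \<subseteq> J - B'" "finite Y" "card Y = Suc k"
    using infinite_arbitrarily_large by blast
  then obtain y where y: "y \<in> Y"
    by (metis card.empty ex_in_conv nat.distinct(1))
  have "B' \<union> Y \<in> I"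
    by (rule indep_subset[OF J(1)]) (use J Y in blast)
  moreover have "B' \<union> Y - insert y B' = Y - {y}"
    using Y by auto
  ultimately have "insert y B' \<in> trunc k I"
    by (intro trunc_memI[of "B' \<union> Y"]) (use Y y in auto)
  then show False
    using maximal_in_insert[OF B'] y Y by blast
qed

lemma trunc_basis_of_basis_minus:
  assumes B: "basis I B" and X: "X \<subseteq> B" "finite X" "card X = k"
  shows "basis (trunc k I) (B - X)"
  unfolding maximal_in_def
proof (intro conjI ballI impI)
  show "B - X \<in> trunc k I"
    using trunc_memI[OF maximal_in_mem[OF B]] X by (simp add: double_diff)
next
  fix T assume T: "T \<in> trunc k I" "B - X \<subseteq> T"
  then obtain U where U: "U \<in> I" "T \<subseteq> U" "finite (U - T)" "card (U - T) = k"
    unfolding trunc_def by blast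
  have "B - X \<subseteq> U"
    using T(2) U(2) by blast
  then have L: "finite (U - (B - X)) \<and> card (U - (B - X)) \<le> k"
    using card_indep_over_basis_minus_le[OF B X(1,2) U(1)] X(3) by simp
  have split: "U - (B - X) = (U - T) \<union> (T - (B - X))"
    using T U by blast
  then have "finite (T - (B - X))"
    using L by (metis finite_Un)
  moreover have "card (U - (B - X)) = card (U - T) + card (T - (B - X))"
    unfolding split using U(3) calculation by (intro card_Un_disjoint) auto
  ultimately have "T - (B - X) = {}"
    using L U(4) by simp
  then show "T = B - X"
    using T(2) by blast
qed

lemma infinite_basis_if_not_0_nearly_finitary:
  assumes "\<not> n_nearly_finitary 0 E I" and B: "basis I B"
  shows "infinite B"
proof
  assume "finite B"
  obtain F B0 where F: "basis (fin_indep E I) F" and B0: "basis I B0" "B0 \<subseteq> F"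
    and "F - B0 \<noteq> {}"
    using assms(1) unfolding n_nearly_finitary_def by fastforce
  then obtain f where f: "f \<in> F" "f \<notin> B0"
    by blast
  have "finite B0"
    using basis_diff_card_le[OF B B0(1)] \<open>finite B\<close> by (metis finite_Diff2 finite_Diff)
  moreover have "insert f B0 \<subseteq> F"
    using f B0(2) by blast
  ultimately have "insert f B0 \<in> I"
    using maximal_in_mem[OF F] unfolding fin_indep_def by blast
  then show False
    using maximal_in_insert[OF B0(1)] f by blast
qed

lemma nearly_finitary_trunc:
  assumes "nearly_finitary E I" and inf: "\<And>B. basis I B \<Longrightarrow> infinite B"
  shows "nearly_finitary E (trunc k I)"
  unfolding nearly_finitary_def
proof (intro allI impI)
  fix F B'
  assume "basis (fin_indep E (trunc k I)) F" and B': "basis (trunc k I) B'" and "B' \<subseteq> F"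
  then have F: "basis (fin_indep E I) F"
    using fin_indep_trunc_eq[OF inf] by simp
  have "B' \<in> I"
    using maximal_in_mem[OF B'] trunc_subset by blast
  moreover have "F \<subseteq> E"
    using maximal_in_mem[OF F] unfolding fin_indep_def by blast
  ultimately obtain S where S: "B' \<subseteq> S" "S \<subseteq> F" "maximal_in {J \<in> I. J \<subseteq> F} S"
    using maximal_indep_subsetE \<open>B' \<subseteq> F\<close> by metis
  have "finite (F - S)"
    using assms(1) F maximal_in_fin_basis_is_basis[OF F S(3)] S(2)
    unfolding nearly_finitary_def by blast
  moreover have "finite (S - B')"
    using trunc_basis_finite_diff[OF B' _ S(1)] maximal_in_mem[OF S(3)] by simp
  moreover have "F - B' \<subseteq> (F - S) \<union> (S - B')"
    by blast
  ultimately show "finite (F - B')"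
    using finite_subset by blast
qed

lemma not_n_nearly_finitary_trunc:
  assumes "\<not> n_nearly_finitary n E I" and inf: "\<And>B. basis I B \<Longrightarrow> infinite B"
  shows "\<not> n_nearly_finitary n E (trunc k I)"
proof -
  obtain F B where F: "basis (fin_indep E I) F" and B: "basis I B" "B \<subseteq> F"
    and large: "\<not> (finite (F - B) \<and> card (F - B) \<le> n)"
    using assms(1) unfolding n_nearly_finitary_def by blast
  obtain X where X: "X \<subseteq> B" "finite X" "card X = k"
    using infinite_arbitrarily_large[OF inf[OF B(1)]] by blast
  have "F - B \<subseteq> F - (B - X)"
    by blast
  then have "\<not> (finite (F - (B - X)) \<and> card (F - (B - X)) \<le> n)"
    using large by (meson card_mono le_trans rev_finite_subset)
  moreover have "basis (fin_indep E (trunc k I)) F"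
    using F fin_indep_trunc_eq[OF inf] by simp
  ultimately show ?thesis
    unfolding n_nearly_finitary_def
    using trunc_basis_of_basis_minus[OF B(1) X] B(2) by blast
qed

end

theorem theorem3p4p5:
  fixes E :: "'a set" and \<I> :: "'a set set" and k :: nat
  assumes "matroid E \<I>"
    and "nearly_finitary E \<I>"
    and "\<forall>n. \<not> n_nearly_finitary n E \<I>"
  shows "nearly_finitary E (trunc k \<I>) \<and> (\<forall>n. \<not> n_nearly_finitary n E (trunc k \<I>))"
proof -
  interpret matroid_on E \<I>
    using assms(1) by (rule matroid_on.intro)
  have "\<And>B. basis \<I> B \<Longrightarrow> infinite B"
    using infinite_basis_if_not_0_nearly_finitary assms(3) by blast
  then show ?thesis
    using nearly_finitary_trunc not_n_nearly_finitary_trunc assms(2,3) by blast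
qed

end
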